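(* Let $X$ be a non-empty topological space. The following are equivalent: (1) $X$ is Baire; (2) \textsc{Alice} does not have a winning strategy in $\mathsf{BM}(X)$; (3) \textsc{Alice} does not have a winning strategy in $\mathsf{BM}_\mathrm{fin}(X)$; (4) \textsc{Alice} does not have a winning strategy in $\mathsf{BM}_\omega(X)$.
   Context: A Baire space is a space in which countable intersections of dense open sets are dense. The Banach–Mazur game $\mathsf{BM}(X)$: \textsc{Alice} and \textsc{Bob} alternately choose non-empty open sets $A_0\supseteq B_0\supseteq A_1\supseteq B_1\supseteq\cdots$, \textsc{Alice} starting; \textsc{Bob} wins if $\bigcap_n B_n\neq\emptyset$, otherwise \textsc{Alice} wins. The game $\mathsf{BM}_\mathrm{fin}(X)$: \textsc{Alice} plays a non-empty open set $A_0$; \textsc{Bob} plays a finite collection $\mathcal{B}_0$ of non-empty open subsets of $A_0$; in inning $n+1$, for each $B \in \mathcal{B}_n$ \textsc{Alice} plays a non-empty open set $A_B \subseteq B$, letting $\mathcal{A}_{n+1}=\{A_B : B\in\mathcal{B}_n\}$, and \textsc{Bob} plays a finite collection $\mathcal{B}_{n+1}$ of non-empty open subsets of $\bigcup\mathcal{A}_{n+1}$; \textsc{Bob} wins if $\bigcap_{n}\bigcup\mathcal{B}_n\neq\emptyset$, otherwise \textsc{Alice} wins. The game $\mathsf{BM}_\omega(X)$ is defined identically to $\mathsf{BM}_\mathrm{fin}(X)$ except that each collection $\mathcal{B}_n$ played by \textsc{Bob} is countable instead of finite. *)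

theory Defs
  imports "HOL-Analysis.Analysis"
begin

definition dense_in_top :: "'a topology \<Rightarrow> 'a set \<Rightarrow> bool" where
  "dense_in_top X S \<longleftrightarrow> X closure_of S = topspace X"

definition baire_space :: "'a topology \<Rightarrow> bool" where
  "baire_space X \<longleftrightarrow>
     (\<forall>U :: nat \<Rightarrow> 'a set. (\<forall>n. openin X (U n) \<and> dense_in_top X (U n))
        \<longrightarrow> dense_in_top X (\<Inter>n. U n))"

text \<open>A strategy of Alice in BM(X) maps the list [B_0,...,B_(n-1)] of Bob's previous
  moves to her next move A_n (her own earlier moves are determined by the strategy).\<close>

definition bm_legal_hist :: "'a topology \<Rightarrow> ('a set list \<Rightarrow> 'a set) \<Rightarrow> 'a set list \<Rightarrow> bool" where
  "bm_legal_hist X \<sigma> bs \<longleftrightarrow>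
     (\<forall>k < length bs. openin X (bs ! k) \<and> bs ! k \<noteq> {} \<and> bs ! k \<subseteq> \<sigma> (take k bs))"

definition bm_alice_strategy :: "'a topology \<Rightarrow> ('a set list \<Rightarrow> 'a set) \<Rightarrow> bool" where
  "bm_alice_strategy X \<sigma> \<longleftrightarrow>
     (\<forall>bs. bm_legal_hist X \<sigma> bs \<longrightarrow>
        openin X (\<sigma> bs) \<and> \<sigma> bs \<noteq> {} \<and> (bs \<noteq> [] \<longrightarrow> \<sigma> bs \<subseteq> last bs))"

definition bm_alice_winning :: "'a topology \<Rightarrow> ('a set list \<Rightarrow> 'a set) \<Rightarrow> bool" where
  "bm_alice_winning X \<sigma> \<longleftrightarrow> bm_alice_strategy X \<sigma> \<and>
     (\<forall>B :: nat \<Rightarrow> 'a set. (\<forall>n. bm_legal_hist X \<sigma> (map B [0..<n])) \<longrightarrow> (\<Inter>n. B n) = {})"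

definition alice_wins_BM :: "'a topology \<Rightarrow> bool" where
  "alice_wins_BM X \<longleftrightarrow> (\<exists>\<sigma>. bm_alice_winning X \<sigma>)"

text \<open>Alice's strategy consists of her
  first move A0 and a map \<sigma> sending the history [B_0,...,B_n] of Bob's collections and a
  set B \<in> B_n to her response A_B.  The collection A_k played by Alice in inning k is
  alice_moves A0 \<sigma> bs k.\<close>

definition alice_moves ::
  "'a set \<Rightarrow> ('a set set list \<Rightarrow> 'a set \<Rightarrow> 'a set) \<Rightarrow> 'a set set list \<Rightarrow> nat \<Rightarrow> 'a set set" where
  "alice_moves A0 \<sigma> bs k = (if k = 0 then {A0} else (\<sigma> (take k bs)) ` (bs ! (k - 1)))"

definition bmc_legal_hist ::
  "('a set set \<Rightarrow> bool) \<Rightarrow> 'a topology \<Rightarrow> 'a set \<Rightarrow> ('a set set list \<Rightarrow> 'a set \<Rightarrow> 'a set)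
     \<Rightarrow> 'a set set list \<Rightarrow> bool" where
  "bmc_legal_hist P X A0 \<sigma> bs \<longleftrightarrow>
     (\<forall>k < length bs. P (bs ! k) \<and> (\<forall>B \<in> bs ! k. openin X B \<and> B \<noteq> {}) \<and>
        \<Union>(bs ! k) \<subseteq> \<Union>(alice_moves A0 \<sigma> bs k))"

definition bmc_alice_strategy ::
  "('a set set \<Rightarrow> bool) \<Rightarrow> 'a topology \<Rightarrow> 'a set \<Rightarrow> ('a set set list \<Rightarrow> 'a set \<Rightarrow> 'a set) \<Rightarrow> bool" where
  "bmc_alice_strategy P X A0 \<sigma> \<longleftrightarrow> openin X A0 \<and> A0 \<noteq> {} \<and>
     (\<forall>bs. bs \<noteq> [] \<and> bmc_legal_hist P X A0 \<sigma> bs \<longrightarrow>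
        (\<forall>B \<in> last bs. openin X (\<sigma> bs B) \<and> \<sigma> bs B \<noteq> {} \<and> \<sigma> bs B \<subseteq> B))"

definition bmc_alice_winning ::
  "('a set set \<Rightarrow> bool) \<Rightarrow> 'a topology \<Rightarrow> 'a set \<Rightarrow> ('a set set list \<Rightarrow> 'a set \<Rightarrow> 'a set) \<Rightarrow> bool" where
  "bmc_alice_winning P X A0 \<sigma> \<longleftrightarrow> bmc_alice_strategy P X A0 \<sigma> \<and>
     (\<forall>Bs :: nat \<Rightarrow> 'a set set. (\<forall>n. bmc_legal_hist P X A0 \<sigma> (map Bs [0..<n]))
        \<longrightarrow> (\<Inter>n. \<Union>(Bs n)) = {})"

definition alice_wins_BM_fin :: "'a topology \<Rightarrow> bool" where
  "alice_wins_BM_fin X \<longleftrightarrow> (\<exists>A0 \<sigma>. bmc_alice_winning finite X A0 \<sigma>)"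

definition alice_wins_BM_omega :: "'a topology \<Rightarrow> bool" where
  "alice_wins_BM_omega X \<longleftrightarrow> (\<exists>A0 \<sigma>. bmc_alice_winning countable X A0 \<sigma>)"

end

theory Submission
  imports Defs
begin

text \<open>
  A winning strategy of Alice in \<open>BM\<^sub>\<omega>\<close> is one in \<open>BM\<^sub>f\<^sub>i\<^sub>n\<close>, and one in \<open>BM\<^sub>f\<^sub>i\<^sub>n\<close> yields one
  in \<open>BM\<close> by letting Bob play only singletons.  If \<open>X\<close> is not Baire, pick open dense sets
  \<open>D\<^sub>n\<close> whose intersection misses a non-empty open set \<open>U\<close>; Alice opens with \<open>U\<close> and answers
  each set \<open>B\<close> of Bob's \<open>n\<close>-th collection by \<open>B \<inter> D\<^sub>n\<close>, which wins no matter how large Bob's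
  collections are.  Finally, if \<sigma> is a winning strategy in \<open>BM\<close>, Oxtoby's construction
  chooses, level by level, a maximal family of positions whose answers under \<sigma> are pairwise
  disjoint; the unions of the answers on each level are open and dense in Alice's first
  move, so in a Baire space some point lies in all of them, and by disjointness this point
  determines a single play compatible with \<sigma> that Bob wins.
\<close>

subsection \<open>Oxtoby's argument for Baire spaces\<close>

lemma exists_maximal_disjoint_subfamily:
  fixes f :: "'i \<Rightarrow> 'a set"
  obtains F where "F \<subseteq> S" "pairwise (\<lambda>i j. disjnt (f i) (f j)) F"
    "\<And>i. i \<in> S \<Longrightarrow> f i \<noteq> {} \<Longrightarrow> \<exists>j\<in>F. \<not> disjnt (f i) (f j)"
proof -
  define \<A> where "\<A> = {F. F \<subseteq> S \<and> pairwise (\<lambda>i j. disjnt (f i) (f j)) F}"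
  have "\<forall>\<C>\<in>chains \<A>. \<Union>\<C> \<in> \<A>"
    unfolding \<A>_def chains_def by (blast intro: pairwise_chain_Union)
  then obtain M where M: "M \<in> \<A>" and max: "\<forall>F\<in>\<A>. M \<subseteq> F \<longrightarrow> F = M"
    using Zorn_Lemma by blast
  show thesis
  proof (rule that)
    show "M \<subseteq> S" "pairwise (\<lambda>i j. disjnt (f i) (f j)) M"
      using M unfolding \<A>_def by auto
    fix i assume i: "i \<in> S" "f i \<noteq> {}"
    show "\<exists>j\<in>M. \<not> disjnt (f i) (f j)"
    proof (rule ccontr)
      assume none: "\<not> (\<exists>j\<in>M. \<not> disjnt (f i) (f j))"
      then have "insert i M \<in> \<A>"
        using M i unfolding \<A>_def by (auto simp: pairwise_insert disjnt_sym)
      then have "i \<in> M" using max by blast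
      then show False using none i(2) by (auto simp: disjnt_def)
    qed
  qed
qed

lemma butlast_chain_eq_map_last:
  assumes "\<And>n. length (P n) = n" "\<And>n. butlast (P (Suc n)) = P n"
  shows "P n = map (\<lambda>k. last (P (Suc k))) [0..<n]"
proof (induction n)
  case 0
  then show ?case using assms(1)[of 0] by simp
next
  case (Suc n)
  have "P (Suc n) = butlast (P (Suc n)) @ [last (P (Suc n))]"
    using assms(1)[of "Suc n"] by (metis append_butlast_last_id list.size(3) nat.distinct(1))
  then show ?case using Suc assms(2)[of n] by simp
qed

lemma baire_space_Inter_meets_open:
  fixes W :: "nat \<Rightarrow> 'a set"
  assumes "baire_space X" "openin X U" "U \<noteq> {}"
    and "\<And>n. openin X (W n)" "\<And>n. U \<subseteq> X closure_of W n"
  shows "U \<inter> (\<Inter>n. W n) \<noteq> {}"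
proof -
  define D where "D n = W n \<union> (topspace X - X closure_of U)" for n
  have dense: "dense_in_top X (D n)" for n
  proof -
    have "X closure_of U \<subseteq> X closure_of W n"
      using assms(5) closedin_closure_of closure_of_minimal by blast
    moreover have "topspace X - X closure_of U \<subseteq> X closure_of (topspace X - X closure_of U)"
      by (rule closure_of_subset) blast
    ultimately have "topspace X \<subseteq> X closure_of D n"
      unfolding D_def closure_of_Un by auto
    then show ?thesis
      unfolding dense_in_top_def by (simp add: closure_of_subset_topspace subset_antisym)
  qed
  moreover have "openin X (D n)" for n
    unfolding D_def using assms(4) by (simp add: openin_Un openin_diff)
  ultimately have "dense_in_top X (\<Inter>n. D n)"
    using assms(1) unfolding baire_space_def by blast
  then have "(\<Inter>n. D n) \<inter> U \<noteq> {}"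
    using assms(2,3) unfolding dense_in_top_def dense_intersects_open by simp
  then obtain y where "y \<in> U" "\<And>n. y \<in> D n"
    by blast
  moreover have "y \<in> X closure_of U"
    using \<open>y \<in> U\<close> assms(2) closure_of_subset openin_subset by (metis subsetD)
  ultimately show ?thesis unfolding D_def by blast
qed

lemma bm_legal_hist_snoc:
  "bm_legal_hist X \<sigma> (p @ [V]) \<longleftrightarrow> bm_legal_hist X \<sigma> p \<and> openin X V \<and> V \<noteq> {} \<and> V \<subseteq> \<sigma> p"
  unfolding bm_legal_hist_def by (auto simp: nth_append less_Suc_eq)

lemma bm_alice_strategy_response:
  assumes "bm_alice_strategy X \<sigma>" "bm_legal_hist X \<sigma> p"
  shows "openin X (\<sigma> p)" "\<sigma> p \<noteq> {}" "p \<noteq> [] \<Longrightarrow> \<sigma> p \<subseteq> last p"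
  using assms unfolding bm_alice_strategy_def by auto

definition bm_successors ::
  "'a topology \<Rightarrow> ('a set list \<Rightarrow> 'a set) \<Rightarrow> 'a set list set \<Rightarrow> 'a set list set" where
  "bm_successors X \<sigma> T = {q. bm_legal_hist X \<sigma> q \<and> q \<noteq> [] \<and> butlast q \<in> T}"

locale bm_oxtoby_tree =
  fixes X :: "'a topology" and \<sigma> :: "'a set list \<Rightarrow> 'a set" and T :: "nat \<Rightarrow> 'a set list set"
  assumes strategy: "bm_alice_strategy X \<sigma>"
    and level_0: "T 0 = {[]}"
    and level_Suc_subset: "T (Suc n) \<subseteq> bm_successors X \<sigma> (T n)"
    and level_disjoint: "pairwise (\<lambda>p q. disjnt (\<sigma> p) (\<sigma> q)) (T n)"
    and level_maximal: "q \<in> bm_successors X \<sigma> (T n) \<Longrightarrow> \<exists>p\<in>T (Suc n). \<not> disjnt (\<sigma> q) (\<sigma> p)"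
begin

lemma level_legal: "p \<in> T n \<Longrightarrow> bm_legal_hist X \<sigma> p \<and> length p = n"
proof (induction n arbitrary: p)
  case 0
  then show ?case using level_0 by (simp add: bm_legal_hist_def)
next
  case (Suc n)
  then have p: "bm_legal_hist X \<sigma> p" "p \<noteq> []" "butlast p \<in> T n"
    using level_Suc_subset by (auto simp: bm_successors_def)
  then have "length (butlast p) = n"
    using Suc.IH by blast
  with p show ?case by (cases p rule: rev_cases) auto
qed

lemma level_open: "openin X (\<Union>(\<sigma> ` T n))"
  using level_legal bm_alice_strategy_response(1)[OF strategy] by blast

lemma level_response_unique: "p \<in> T n \<Longrightarrow> q \<in> T n \<Longrightarrow> x \<in> \<sigma> p \<Longrightarrow> x \<in> \<sigma> q \<Longrightarrow> p = q"
  using level_disjoint[of n] unfolding pairwise_def disjnt_def by blast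

lemma level_parent:
  assumes "q \<in> T (Suc n)" "p \<in> T n" "x \<in> \<sigma> q" "x \<in> \<sigma> p"
  shows "butlast q = p"
proof -
  have q: "bm_legal_hist X \<sigma> q" "q \<noteq> []" "butlast q \<in> T n"
    using assms(1) level_Suc_subset by (auto simp: bm_successors_def)
  then have "last q \<subseteq> \<sigma> (butlast q)"
    using bm_legal_hist_snoc[of X \<sigma> "butlast q" "last q"] by simp
  moreover have "\<sigma> q \<subseteq> last q"
    using q bm_alice_strategy_response(3)[OF strategy] by blast
  ultimately show ?thesis
    using q(3) assms level_response_unique by blast
qed

lemma level_subset_closure_level_Suc: "\<Union>(\<sigma> ` T n) \<subseteq> X closure_of \<Union>(\<sigma> ` T (Suc n))"
proof
  fix x assume "x \<in> \<Union>(\<sigma> ` T n)"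
  then obtain p where p: "p \<in> T n" "x \<in> \<sigma> p" by blast
  have p_legal: "bm_legal_hist X \<sigma> p" and p_open: "openin X (\<sigma> p)"
    using p(1) level_legal bm_alice_strategy_response(1)[OF strategy] by blast+
  show "x \<in> X closure_of \<Union>(\<sigma> ` T (Suc n))"
    unfolding in_closure_of
  proof (intro conjI allI impI)
    show "x \<in> topspace X" using p p_open openin_subset by blast
    fix V assume V: "x \<in> V \<and> openin X V"
    \<comment> \<open>Bob's move \<open>V \<inter> \<sigma> p\<close> after \<open>p\<close> is a successor, so its answer meets an answer on the next level.\<close>
    define q where "q = p @ [V \<inter> \<sigma> p]"
    have "q \<in> bm_successors X \<sigma> (T n)"
      using p V p_legal p_open by (auto simp: q_def bm_successors_def bm_legal_hist_snoc)
    then obtain r where "r \<in> T (Suc n)" "\<not> disjnt (\<sigma> q) (\<sigma> r)"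
      using level_maximal by blast
    moreover have "\<sigma> q \<subseteq> V"
      using \<open>q \<in> bm_successors X \<sigma> (T n)\<close> bm_alice_strategy_response(3)[OF strategy]
      by (fastforce simp: q_def bm_successors_def)
    ultimately show "\<exists>y. y \<in> \<Union>(\<sigma> ` T (Suc n)) \<and> y \<in> V"
      unfolding disjnt_def by blast
  qed
qed

lemma first_move_subset_closure_level: "\<sigma> [] \<subseteq> X closure_of \<Union>(\<sigma> ` T n)"
proof (induction n)
  case 0
  have "openin X (\<sigma> [])"
    using bm_alice_strategy_response(1)[OF strategy] by (simp add: bm_legal_hist_def)
  then show ?case using level_0 closure_of_subset[OF openin_subset] by simp
next
  case (Suc n)
  have "X closure_of \<Union>(\<sigma> ` T n) \<subseteq> X closure_of \<Union>(\<sigma> ` T (Suc n))"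
    using level_subset_closure_level_Suc by (simp add: closure_of_minimal)
  then show ?case using Suc by blast
qed

lemma branch_through:
  assumes "\<And>n. x \<in> \<Union>(\<sigma> ` T n)"
  obtains B where "\<And>n. bm_legal_hist X \<sigma> (map B [0..<n])" "\<And>n. x \<in> B n"
proof -
  have "\<forall>n. \<exists>p. p \<in> T n \<and> x \<in> \<sigma> p"
    using assms by blast
  then obtain P where P: "\<And>n. P n \<in> T n" "\<And>n. x \<in> \<sigma> (P n)"
    by metis
  have "length (P n) = n" for n
    using P(1) level_legal by blast
  moreover have "butlast (P (Suc n)) = P n" for n
    using level_parent[OF P(1) P(1) P(2) P(2)] .
  ultimately have P_eq: "P n = map (\<lambda>k. last (P (Suc k))) [0..<n]" for n
    by (rule butlast_chain_eq_map_last)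
  show thesis
  proof (rule that)
    show "bm_legal_hist X \<sigma> (map (\<lambda>k. last (P (Suc k))) [0..<n])" for n
      using P(1) level_legal P_eq by metis
    show "x \<in> last (P (Suc n))" for n
    proof -
      have "bm_legal_hist X \<sigma> (P (Suc n))" "P (Suc n) \<noteq> []"
        using level_legal[OF P(1)[of "Suc n"]] by auto
      then show ?thesis
        using P(2) bm_alice_strategy_response(3)[OF strategy] by blast
    qed
  qed
qed

end

lemma bm_oxtoby_tree_exists:
  assumes "bm_alice_strategy X \<sigma>"
  obtains T where "bm_oxtoby_tree X \<sigma> T"
proof -
  have "\<exists>F. F \<subseteq> bm_successors X \<sigma> S \<and> pairwise (\<lambda>p q. disjnt (\<sigma> p) (\<sigma> q)) F \<and>
      (\<forall>q\<in>bm_successors X \<sigma> S. \<exists>p\<in>F. \<not> disjnt (\<sigma> q) (\<sigma> p))" for S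
  proof -
    obtain F where F: "F \<subseteq> bm_successors X \<sigma> S" "pairwise (\<lambda>p q. disjnt (\<sigma> p) (\<sigma> q)) F"
      and maximal: "\<And>q. q \<in> bm_successors X \<sigma> S \<Longrightarrow> \<sigma> q \<noteq> {} \<Longrightarrow> \<exists>p\<in>F. \<not> disjnt (\<sigma> q) (\<sigma> p)"
      using exists_maximal_disjoint_subfamily[where S = "bm_successors X \<sigma> S" and f = \<sigma>] by blast
    have "\<sigma> q \<noteq> {}" if "q \<in> bm_successors X \<sigma> S" for q
      using that bm_alice_strategy_response(2)[OF assms] by (simp add: bm_successors_def)
    with F maximal show ?thesis
      by (intro exI[of _ F]) blast
  qed
  then obtain next_level where next_level:
    "\<And>S. next_level S \<subseteq> bm_successors X \<sigma> S"
    "\<And>S. pairwise (\<lambda>p q. disjnt (\<sigma> p) (\<sigma> q)) (next_level S)"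
    "\<And>S q. q \<in> bm_successors X \<sigma> S \<Longrightarrow> \<exists>p\<in>next_level S. \<not> disjnt (\<sigma> q) (\<sigma> p)"
    by metis
  define T where "T = rec_nat {[]} (\<lambda>_. next_level)"
  have "bm_oxtoby_tree X \<sigma> T"
  proof unfold_locales
    show "pairwise (\<lambda>p q. disjnt (\<sigma> p) (\<sigma> q)) (T n)" for n
      using next_level(2) by (cases n) (simp_all add: T_def)
  qed (use assms next_level in \<open>simp_all add: T_def\<close>)
  then show thesis by (rule that)
qed

theorem baire_space_imp_not_alice_wins_BM:
  assumes "baire_space X"
  shows "\<not> alice_wins_BM X"
proof
  assume "alice_wins_BM X"
  then obtain \<sigma> where strategy: "bm_alice_strategy X \<sigma>"
    and winning: "\<And>B. \<forall>n. bm_legal_hist X \<sigma> (map B [0..<n]) \<Longrightarrow> (\<Inter>n. B n) = {}"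
    unfolding alice_wins_BM_def bm_alice_winning_def by blast
  obtain T where "bm_oxtoby_tree X \<sigma> T"
    using bm_oxtoby_tree_exists[OF strategy] by blast
  then interpret bm_oxtoby_tree X \<sigma> T .
  have "openin X (\<sigma> [])" "\<sigma> [] \<noteq> {}"
    using bm_alice_strategy_response[OF strategy] by (auto simp: bm_legal_hist_def)
  then have "\<sigma> [] \<inter> (\<Inter>n. \<Union>(\<sigma> ` T n)) \<noteq> {}"
    using level_open first_move_subset_closure_level by (rule baire_space_Inter_meets_open[OF assms])
  then obtain x where "\<And>n. x \<in> \<Union>(\<sigma> ` T n)"
    by blast
  then obtain B where "\<And>n. bm_legal_hist X \<sigma> (map B [0..<n])" "\<And>n. x \<in> B n"
    using branch_through by blast
  then show False using winning by blast
qed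

lemma bmc_legal_hist_mono:
  assumes "\<And>C. P C \<Longrightarrow> Q C" "bmc_legal_hist P X A0 \<sigma> bs"
  shows "bmc_legal_hist Q X A0 \<sigma> bs"
  using assms unfolding bmc_legal_hist_def by blast

lemma bmc_alice_winning_mono:
  assumes "\<And>C. P C \<Longrightarrow> Q C" "bmc_alice_winning Q X A0 \<sigma>"
  shows "bmc_alice_winning P X A0 \<sigma>"
proof -
  have legal: "bmc_legal_hist Q X A0 \<sigma> bs" if "bmc_legal_hist P X A0 \<sigma> bs" for bs
    using assms(1) that by (rule bmc_legal_hist_mono)
  have "bmc_alice_strategy P X A0 \<sigma>"
    using assms(2) legal unfolding bmc_alice_winning_def bmc_alice_strategy_def by simp
  moreover have "(\<Inter>n. \<Union>(Bs n)) = {}" if "\<forall>n. bmc_legal_hist P X A0 \<sigma> (map Bs [0..<n])" for Bs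
    using assms(2) legal that unfolding bmc_alice_winning_def by simp
  ultimately show ?thesis
    unfolding bmc_alice_winning_def by blast
qed

definition bm_singleton_strategy ::
  "'a set \<Rightarrow> ('a set set list \<Rightarrow> 'a set \<Rightarrow> 'a set) \<Rightarrow> 'a set list \<Rightarrow> 'a set" where
  "bm_singleton_strategy A0 \<sigma> bs = (if bs = [] then A0 else \<sigma> (map (\<lambda>B. {B}) bs) (last bs))"

lemma alice_moves_singletons:
  assumes "k \<le> length bs"
  shows "\<Union>(alice_moves A0 \<sigma> (map (\<lambda>B. {B}) bs) k) = bm_singleton_strategy A0 \<sigma> (take k bs)"
proof (cases k)
  case 0
  then show ?thesis by (simp add: alice_moves_def bm_singleton_strategy_def)
next
  case (Suc j)
  then have "take k bs = take j bs @ [bs ! j]"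
    using assms by (simp add: take_Suc_conv_app_nth)
  then show ?thesis
    using Suc assms by (simp add: alice_moves_def bm_singleton_strategy_def take_map)
qed

lemma bm_legal_hist_imp_bmc_legal_hist_singletons:
  assumes "\<And>B. P {B}" "bm_legal_hist X (bm_singleton_strategy A0 \<sigma>) bs"
  shows "bmc_legal_hist P X A0 \<sigma> (map (\<lambda>B. {B}) bs)"
  using assms alice_moves_singletons[of _ bs A0 \<sigma>]
  unfolding bm_legal_hist_def bmc_legal_hist_def by simp

lemma bmc_alice_winning_imp_bm_alice_winning:
  assumes singletons: "\<And>B. P {B}" and winning: "bmc_alice_winning P X A0 \<sigma>"
  shows "bm_alice_winning X (bm_singleton_strategy A0 \<sigma>)"
  unfolding bm_alice_winning_def
proof (intro conjI allI impI)
  let ?\<tau> = "bm_singleton_strategy A0 \<sigma>"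
  have strategy: "bmc_alice_strategy P X A0 \<sigma>"
    using winning unfolding bmc_alice_winning_def by blast
  show "bm_alice_strategy X ?\<tau>"
    unfolding bm_alice_strategy_def
  proof (intro allI impI)
    fix bs assume legal: "bm_legal_hist X ?\<tau> bs"
    show "openin X (?\<tau> bs) \<and> ?\<tau> bs \<noteq> {} \<and> (bs \<noteq> [] \<longrightarrow> ?\<tau> bs \<subseteq> last bs)"
    proof (cases "bs = []")
      case True
      then show ?thesis using strategy by (simp add: bm_singleton_strategy_def bmc_alice_strategy_def)
    next
      case False
      then have "last bs \<in> last (map (\<lambda>B. {B}) bs)"
        by (simp add: last_map)
      with False strategy bm_legal_hist_imp_bmc_legal_hist_singletons[of P, OF singletons legal]
      show ?thesis
        unfolding bmc_alice_strategy_def bm_singleton_strategy_def by simp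
    qed
  qed
  fix B :: "nat \<Rightarrow> 'a set"
  assume "\<forall>n. bm_legal_hist X ?\<tau> (map B [0..<n])"
  then have "bmc_legal_hist P X A0 \<sigma> (map (\<lambda>n. {B n}) [0..<n])" for n
    using bm_legal_hist_imp_bmc_legal_hist_singletons[of P, OF singletons, of X A0 \<sigma> "map B [0..<n]"]
    by (simp add: comp_def)
  then have "(\<Inter>n. \<Union>{B n}) = {}"
    using winning unfolding bmc_alice_winning_def by blast
  then show "(\<Inter>n. B n) = {}" by simp
qed

subsection \<open>Alice's strategy in a non-Baire space\<close>

lemma bmc_legal_play_subset:
  assumes "\<And>n. bmc_legal_hist P X A0 \<sigma> (map Bs [0..<n])"
  shows "\<Union>(Bs 0) \<subseteq> A0"
    and "\<Union>(Bs (Suc n)) \<subseteq> \<Union>(\<sigma> (map Bs [0..<Suc n]) ` Bs n)"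
proof -
  show "\<Union>(Bs 0) \<subseteq> A0"
    using assms[of 1] by (simp add: bmc_legal_hist_def alice_moves_def)
  have "\<Union>(map Bs [0..<Suc (Suc n)] ! Suc n) \<subseteq> \<Union>(alice_moves A0 \<sigma> (map Bs [0..<Suc (Suc n)]) (Suc n))"
    using assms[of "Suc (Suc n)"] unfolding bmc_legal_hist_def by (metis diff_zero length_map length_upt lessI)
  then show "\<Union>(Bs (Suc n)) \<subseteq> \<Union>(\<sigma> (map Bs [0..<Suc n]) ` Bs n)"
    by (simp add: alice_moves_def take_map del: upt_Suc)
qed

lemma not_baire_space_imp_bmc_alice_winning:
  assumes "\<not> baire_space X"
  obtains A0 \<sigma> where "bmc_alice_winning P X A0 \<sigma>"
proof -
  obtain D :: "nat \<Rightarrow> 'a set" where D_open: "\<And>n. openin X (D n)"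
    and D_dense: "\<And>n. dense_in_top X (D n)" and not_dense: "\<not> dense_in_top X (\<Inter>n. D n)"
    using assms unfolding baire_space_def by blast
  define U where "U = topspace X - X closure_of (\<Inter>n. D n)"
  have U_open: "openin X U" and U_nonempty: "U \<noteq> {}"
    using not_dense closure_of_subset_topspace[of X "\<Inter>n. D n"]
    unfolding U_def dense_in_top_def by (auto simp: openin_diff)
  have "(\<Inter>n. D n) \<subseteq> topspace X"
    using openin_subset[OF D_open[of 0]] by blast
  then have U_disjoint: "U \<inter> (\<Inter>n. D n) = {}"
    using closure_of_subset unfolding U_def by blast
  \<comment> \<open>In inning \<open>n + 1\<close> the history has length \<open>n + 1\<close>, and Alice shrinks into \<open>D\<^sub>n\<close>.\<close>
  define \<sigma> where "\<sigma> bs B = B \<inter> D (length bs - 1)" for bs :: "'a set set list" and B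
  have "bmc_alice_winning P X U \<sigma>"
    unfolding bmc_alice_winning_def bmc_alice_strategy_def
  proof (intro conjI allI impI ballI U_open U_nonempty)
    fix bs B assume legal: "bs \<noteq> [] \<and> bmc_legal_hist P X U \<sigma> bs" and B: "B \<in> last bs"
    have "\<forall>B\<in>bs ! (length bs - 1). openin X B \<and> B \<noteq> {}"
      using legal unfolding bmc_legal_hist_def by (metis diff_less length_greater_0_conv zero_less_one)
    then have "openin X B" "B \<noteq> {}"
      using legal B by (simp_all add: last_conv_nth)
    moreover have "D (length bs - 1) \<inter> B \<noteq> {}"
      using D_dense[unfolded dense_in_top_def dense_intersects_open] calculation by blast
    ultimately show "openin X (\<sigma> bs B)" "\<sigma> bs B \<noteq> {}" "\<sigma> bs B \<subseteq> B"
      using D_open unfolding \<sigma>_def by auto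
  next
    fix Bs :: "nat \<Rightarrow> 'a set set"
    assume "\<forall>n. bmc_legal_hist P X U \<sigma> (map Bs [0..<n])"
    then have in_U: "\<Union>(Bs 0) \<subseteq> U" and in_D: "\<Union>(Bs (Suc n)) \<subseteq> D n" for n
      using bmc_legal_play_subset[of P X U \<sigma> Bs] by (auto simp: \<sigma>_def)
    show "(\<Inter>n. \<Union>(Bs n)) = {}"
    proof (rule equals0I)
      fix x assume x: "x \<in> (\<Inter>n. \<Union>(Bs n))"
      then have "x \<in> D n" for n
        using in_D[of n] by blast
      moreover have "x \<in> U"
        using x in_U by blast
      ultimately show False
        using U_disjoint by blast
    qed
  qed
  then show thesis by (rule that)
qed

theorem corollary3p3:
  fixes X :: "'a topology"
  assumes "topspace X \<noteq> {}"
  shows "(baire_space X \<longleftrightarrow> \<not> alice_wins_BM X)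
       \<and> (\<not> alice_wins_BM X \<longleftrightarrow> \<not> alice_wins_BM_fin X)
       \<and> (\<not> alice_wins_BM_fin X \<longleftrightarrow> \<not> alice_wins_BM_omega X)"
proof -
  have "alice_wins_BM X \<Longrightarrow> \<not> baire_space X"
    using baire_space_imp_not_alice_wins_BM by blast
  moreover have "\<not> baire_space X \<Longrightarrow> alice_wins_BM_omega X"
    unfolding alice_wins_BM_omega_def by (metis not_baire_space_imp_bmc_alice_winning)
  moreover have "alice_wins_BM_omega X \<Longrightarrow> alice_wins_BM_fin X"
    unfolding alice_wins_BM_omega_def alice_wins_BM_fin_def
    using bmc_alice_winning_mono[of finite countable] countable_finite by blast
  moreover have "alice_wins_BM_fin X \<Longrightarrow> alice_wins_BM X"
    unfolding alice_wins_BM_fin_def alice_wins_BM_def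
    using bmc_alice_winning_imp_bm_alice_winning[of finite] by blast
  ultimately show ?thesis
    by blast
qed

end
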